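(* Let $n\ge 1$, let $x^*\in\{0,1\}^n$, and let $\mathcal{D}$ be a finite nonempty background dataset of pairs $(x,y)$ with $x\in\{0,1\}^n$. Fix $f\in\{0,1\}^n$ and let $\Psi_f(x)=(-1)^{\langle f,x\rangle}$. Then for every $i\in[n]$, the SHAP value of $\Psi_f$ at $x^*$ with respect to $\mathcal{D}$ is $$\phi_i^{\Psi_f} \;=\; -\frac{2f_i}{|\mathcal{D}|}\sum_{(x,y)\in\mathcal{D}} \mathbb{1}_{x_i\neq x^*_i}\,(-1)^{\langle f,x\rangle}\,\frac{(|A|+1)\bmod 2}{|A|+1},$$ where $A=A(x)\triangleq\{j\in[n]\;:\; x_j\neq x^*_j,\ j\neq i,\ f_j=1\}$.
   Context: $[n]=\{1,\dots,n\}$ is the set of features and $\langle f,x\rangle=\sum_j f_jx_j$. For $S\subseteq[n]$ and $x,x^*\in\{0,1\}^n$, $x^*_S\oplus x_{[n]\setminus S}$ (also written $(x^*_S,x_{[n]\setminus S})$) denotes the vector $z\in\{0,1\}^n$ with $z_j=x^*_j$ for $j\in S$ and $z_j=x_j$ for $j\notin S$. For a function $h:\{0,1\}^n\to\mathbb{R}$, the value function is $v_h(S)=\frac{1}{|\mathcal{D}|}\sum_{(x,y)\in\mathcal{D}} h(x^*_S\oplus x_{[n]\setminus S})$ (sum over the dataset counted with multiplicity), and the SHAP value of feature $i$ is $\phi_i^h=\sum_{S\subseteq[n]\setminus\{i\}}\frac{|S|!\,(n-|S|-1)!}{n!}\bigl(v_h(S\cup\{i\})-v_h(S)\bigr)$.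 $\mathbb{1}_{x_i\neq x^*_i}$ is $1$ if $x_i\neq x^*_i$ and $0$ otherwise. *)

theory Defs
  imports Complex_Main "HOL-Library.Multiset"
begin

text \<open>Binary vectors in {0,1}^n are functions nat => nat; only the coordinates 1..n matter.\<close>

definition binvec :: "nat \<Rightarrow> (nat \<Rightarrow> nat) \<Rightarrow> bool" where
  "binvec n x \<longleftrightarrow> (\<forall>j\<in>{1..n}. x j \<in> {0,1})"

definition inner_bin :: "nat \<Rightarrow> (nat \<Rightarrow> nat) \<Rightarrow> (nat \<Rightarrow> nat) \<Rightarrow> nat" where
  "inner_bin n f x = (\<Sum>j\<in>{1..n}. f j * x j)"

definition Psi :: "nat \<Rightarrow> (nat \<Rightarrow> nat) \<Rightarrow> (nat \<Rightarrow> nat) \<Rightarrow> real" where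
  "Psi n f x = (-1) ^ inner_bin n f x"

definition merge :: "nat set \<Rightarrow> (nat \<Rightarrow> nat) \<Rightarrow> (nat \<Rightarrow> nat) \<Rightarrow> (nat \<Rightarrow> nat)" where
  "merge S xs x = (\<lambda>j. if j \<in> S then xs j else x j)"

definition vfun :: "(nat \<Rightarrow> nat) \<Rightarrow> ((nat \<Rightarrow> nat) \<times> 'b) multiset \<Rightarrow>
    ((nat \<Rightarrow> nat) \<Rightarrow> real) \<Rightarrow> nat set \<Rightarrow> real" where
  "vfun xs D h S = (\<Sum>\<^sub># (image_mset (\<lambda>(x, y). h (merge S xs x)) D)) / real (size D)"

definition shap :: "nat \<Rightarrow> (nat \<Rightarrow> nat) \<Rightarrow> ((nat \<Rightarrow> nat) \<times> 'b) multiset \<Rightarrow>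
    ((nat \<Rightarrow> nat) \<Rightarrow> real) \<Rightarrow> nat \<Rightarrow> real" where
  "shap n xs D h i = (\<Sum>S\<in>Pow ({1..n} - {i}).
      fact (card S) * fact (n - card S - 1) / fact n
      * (vfun xs D h (insert i S) - vfun xs D h S))"

end

theory Submission
  imports Defs
begin

text \<open>
  SHAP is linear in the value function, which averages over the dataset, so it suffices to
  treat a single background point \<open>x\<close>. Overwriting the coordinates in \<open>S\<close> of \<open>x\<close> by those
  of \<open>x\<^sup>*\<close> multiplies \<open>\<Psi>\<^sub>f(x)\<close> by \<open>(-1)\<^bsup>|S \<inter> B|\<^esup>\<close>, where \<open>B\<close> is the set of coordinates
  \<open>j\<close> with \<open>f\<^sub>j = 1\<close> and \<open>x\<^sub>j \<noteq> x\<^sup>*\<^sub>j\<close>. Hence feature \<open>i\<close> has zero marginal contribution unless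
  \<open>i \<in> B\<close>, and then contributes \<open>-2 \<Psi>\<^sub>f(x) (-1)\<^bsup>|S \<inter> A|\<^esup>\<close> with \<open>A = B - {i}\<close>. In the Shapley
  average of these signs the features outside \<open>A\<close> are dummies, because consecutive Shapley
  weights telescope, and on \<open>A\<close> itself each size class \<open>k\<close> contributes \<open>(-1)\<^sup>k / (|A| + 1)\<close>.
\<close>

lemma sum_sum_mset_swap:
  "(\<Sum>S\<in>P. \<Sum>\<^sub># (image_mset (g S) D)) = \<Sum>\<^sub># (image_mset (\<lambda>p. \<Sum>S\<in>P. g S p) D)"
  by (induction D) (simp_all add: sum.distrib)

lemma sum_mset_diff_real:
  "\<Sum>\<^sub># (image_mset (\<lambda>p. g p - h p) D) = \<Sum>\<^sub># (image_mset g D) - (\<Sum>\<^sub># (image_mset h D) :: real)"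
  by (induction D) simp_all

lemma vfun_eq_mean:
  "vfun xs D h S = \<Sum>\<^sub># (image_mset (\<lambda>p. vfun xs {#p#} h S) D) / real (size D)"
  by (simp add: vfun_def case_prod_unfold)

lemma shap_eq_mean:
  "shap n xs D h i = \<Sum>\<^sub># (image_mset (\<lambda>p. shap n xs {#p#} h i) D) / real (size D)"
proof -
  let ?c = "\<lambda>S. fact (card S) * fact (n - card S - 1) / fact n :: real"
  let ?\<Delta> = "\<lambda>S p. vfun xs {#p#} h (insert i S) - vfun xs {#p#} h S"
  have "shap n xs D h i
      = (\<Sum>S\<in>Pow ({1..n} - {i}). \<Sum>\<^sub># (image_mset (\<lambda>p. ?c S * ?\<Delta> S p) D) / real (size D))"
    unfolding shap_def
    by (intro sum.cong refl, subst (1 2) vfun_eq_mean)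
      (simp only: sum_mset_distrib_left[symmetric] sum_mset_diff_real
        diff_divide_distrib[symmetric] times_divide_eq_right)
  also have "\<dots> = \<Sum>\<^sub># (image_mset (\<lambda>p. shap n xs {#p#} h i) D) / real (size D)"
    by (simp add: shap_def sum_divide_distrib[symmetric] sum_sum_mset_swap)
  finally show ?thesis .
qed

text \<open>The Shapley weight of a coalition of size \<open>s\<close> among the \<open>m\<close> other players;
  \<open>shap\<close> uses \<open>shapley_weight (n - 1)\<close>.\<close>

definition shapley_weight :: "nat \<Rightarrow> nat \<Rightarrow> real" where
  "shapley_weight m s = fact s * fact (m - s) / fact (Suc m)"

lemma shapley_weight_Suc:
  assumes "s \<le> m"
  shows "shapley_weight (Suc m) s + shapley_weight (Suc m) (Suc s) = shapley_weight m s"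
proof -
  define c :: real where "c = fact s * fact (m - s) / fact (Suc (Suc m))"
  have "shapley_weight (Suc m) s = real (Suc m - s) * c"
    unfolding shapley_weight_def c_def using assms by (simp add: Suc_diff_le)
  moreover have "shapley_weight (Suc m) (Suc s) = real (Suc s) * c"
    unfolding shapley_weight_def c_def by simp
  moreover have "shapley_weight m s = real (Suc (Suc m)) * c"
    unfolding shapley_weight_def c_def by (simp del: fact_Suc add: fact_Suc[of "Suc m"])
  ultimately show ?thesis
    using assms by (simp add: ring_distribs(2)[symmetric] of_nat_add[symmetric] del: of_nat_add)
qed

lemma shapley_weight_binomial:
  assumes "k \<le> a"
  shows "real (a choose k) * shapley_weight a k = 1 / real (Suc a)"
proof -
  have "real (a choose k) * (fact k * fact (a - k)) = fact a"
    using binomial_fact_lemma[OF assms] by (metis of_nat_fact of_nat_mult mult.commute)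
  moreover have "fact (Suc a) = real (Suc a) * (fact a :: real)" by simp
  ultimately show ?thesis
    unfolding shapley_weight_def by (simp add: divide_simps del: fact_Suc)
qed

lemma alternating_sum_atMost:
  "(\<Sum>k\<le>a. (-1::real) ^ k) = real ((a + 1) mod 2)"
  by (induction a) (auto simp: mod_Suc minus_one_power_iff)

definition parity_shapley_sum :: "nat set \<Rightarrow> nat set \<Rightarrow> real" where
  "parity_shapley_sum M A =
     (\<Sum>S\<in>Pow M. shapley_weight (card M) (card S) * (-1) ^ card (S \<inter> A))"

lemma parity_shapley_sum_insert_dummy:
  assumes "finite M" "e \<notin> M" "e \<notin> A"
  shows "parity_shapley_sum (insert e M) A = parity_shapley_sum M A"
proof -
  let ?w = "shapley_weight (card M)" and ?w' = "shapley_weight (Suc (card M))"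
  let ?sgn = "\<lambda>S. (-1::real) ^ card (S \<inter> A)"
  have inj: "inj_on (insert e) (Pow M)"
    using assms(2) by (intro inj_onI) (metis Pow_iff insert_ident subsetD)
  have "parity_shapley_sum (insert e M) A
      = (\<Sum>S\<in>Pow M. ?w' (card S) * ?sgn S) + (\<Sum>S\<in>insert e ` Pow M. ?w' (card S) * ?sgn S)"
    unfolding parity_shapley_sum_def Pow_insert using assms
    by (subst sum.union_disjoint) auto
  also have "(\<Sum>S\<in>insert e ` Pow M. ?w' (card S) * ?sgn S) = (\<Sum>S\<in>Pow M. ?w' (Suc (card S)) * ?sgn S)"
    unfolding sum.reindex[OF inj] using assms
    by (intro sum.cong refl) (auto simp: finite_subset card_insert_if)
  also have "(\<Sum>S\<in>Pow M. ?w' (card S) * ?sgn S) + \<dots> = (\<Sum>S\<in>Pow M. ?w (card S) * ?sgn S)"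
    unfolding sum.distrib[symmetric] using assms(1)
    by (intro sum.cong refl) (simp add: shapley_weight_Suc card_mono flip: distrib_right)
  finally show ?thesis unfolding parity_shapley_sum_def .
qed

lemma parity_shapley_sum_self:
  assumes "finite A"
  shows "parity_shapley_sum A A = real ((card A + 1) mod 2) / real (card A + 1)"
proof -
  let ?a = "card A"
  have "parity_shapley_sum A A = (\<Sum>S\<in>Pow A. shapley_weight ?a (card S) * (-1) ^ card S)"
    unfolding parity_shapley_sum_def by (intro sum.cong refl) (auto simp: Int_absorb2)
  also have "\<dots> = (\<Sum>k\<le>?a. \<Sum>S\<in>{S\<in>Pow A. card S = k}. shapley_weight ?a (card S) * (-1) ^ card S)"
    using assms by (intro sum.group[symmetric]) (auto simp: card_mono)
  also have "\<dots> = (\<Sum>k\<le>?a. real (?a choose k) * shapley_weight ?a k * (-1) ^ k)"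
    using assms by (simp add: n_subsets mult.assoc)
  also have "\<dots> = (\<Sum>k\<le>?a. (-1) ^ k) / real (?a + 1)"
    by (simp add: shapley_weight_binomial sum_divide_distrib)
  finally show ?thesis by (simp add: alternating_sum_atMost)
qed

lemma parity_shapley_sum_eq:
  assumes "finite M" "A \<subseteq> M"
  shows "parity_shapley_sum M A = real ((card A + 1) mod 2) / real (card A + 1)"
proof -
  have "parity_shapley_sum (A \<union> C) A = parity_shapley_sum A A" if "finite C" "C \<subseteq> M - A" for C
    using that
    by (induction C rule: finite_subset_induct)
      (use assms in \<open>auto simp: finite_subset parity_shapley_sum_insert_dummy\<close>)
  from this[of "M - A"] assms show ?thesis
    by (simp add: Un_absorb1 Un_Diff_cancel parity_shapley_sum_self finite_subset)
qed

definition sign_flips :: "nat \<Rightarrow> (nat \<Rightarrow> nat) \<Rightarrow> (nat \<Rightarrow> nat) \<Rightarrow> (nat \<Rightarrow> nat) \<Rightarrow> nat set" where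
  "sign_flips n f xs x = {j \<in> {1..n}. f j = 1 \<and> x j \<noteq> xs j}"

lemma Psi_eq_prod: "Psi n f z = (\<Prod>j\<in>{1..n}. (-1) ^ (f j * z j))"
  unfolding Psi_def inner_bin_def by (simp add: power_sum)

lemma Psi_merge:
  assumes "binvec n x" "binvec n xs" "binvec n f" "S \<subseteq> {1..n}"
  shows "Psi n f (merge S xs x) = Psi n f x * (-1) ^ card (S \<inter> sign_flips n f xs x)"
proof -
  let ?B = "sign_flips n f xs x"
  have "S \<inter> ?B = {1..n} \<inter> {j. j \<in> S \<inter> ?B}"
    by (auto simp: sign_flips_def)
  then have "(-1::real) ^ card (S \<inter> ?B) = (\<Prod>j\<in>{1..n}. if j \<in> S \<inter> ?B then -1 else 1)"
    by (simp add: prod.If_cases)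
  moreover have "(-1::real) ^ (f j * merge S xs x j) = (-1) ^ (f j * x j) * (if j \<in> S \<inter> ?B then -1 else 1)"
    if "j \<in> {1..n}" for j
  proof -
    have "f j \<in> {0, 1}" "x j \<in> {0, 1}" "xs j \<in> {0, 1}"
      using assms(1-3) that by (auto simp: binvec_def)
    then show ?thesis
      using that by (auto simp: merge_def sign_flips_def)
  qed
  ultimately show ?thesis
    unfolding Psi_eq_prod by (simp add: prod.distrib)
qed

lemma Psi_merge_insert_diff:
  assumes "binvec n x" "binvec n xs" "binvec n f" "S \<subseteq> {1..n} - {i}" "i \<in> {1..n}"
  shows "Psi n f (merge (insert i S) xs x) - Psi n f (merge S xs x) =
    (if i \<in> sign_flips n f xs x
     then - 2 * Psi n f x * (-1) ^ card (S \<inter> (sign_flips n f xs x - {i})) else 0)"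
proof -
  let ?B = "sign_flips n f xs x"
  have S: "S \<subseteq> {1..n}" "insert i S \<subseteq> {1..n}" "finite S" "i \<notin> S"
    using assms(4,5) finite_subset by auto
  have S_B: "S \<inter> ?B = S \<inter> (?B - {i})" using S(4) by blast
  show ?thesis
  proof (cases "i \<in> ?B")
    case True
    then have "insert i S \<inter> ?B = insert i (S \<inter> (?B - {i}))" by blast
    then have "card (insert i S \<inter> ?B) = Suc (card (S \<inter> (?B - {i})))"
      using S(3) by simp
    then show ?thesis
      using True Psi_merge[OF assms(1-3) S(1)] Psi_merge[OF assms(1-3) S(2)] S_B by simp
  next
    case False
    then have "insert i S \<inter> ?B = S \<inter> ?B" by blast
    then show ?thesis
      using False Psi_merge[OF assms(1-3) S(1)] Psi_merge[OF assms(1-3) S(2)] by simp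
  qed
qed

lemma shap_Psi_singleton:
  assumes "binvec n x" "binvec n xs" "binvec n f" "i \<in> {1..n}"
  shows "shap n xs {#(x, y)#} (Psi n f) i =
    - 2 * real (f i) * ((if x i \<noteq> xs i then 1 else 0) * Psi n f x *
      (let A = {j \<in> {1..n}. x j \<noteq> xs j \<and> j \<noteq> i \<and> f j = 1}
       in real ((card A + 1) mod 2) / real (card A + 1)))"
proof -
  let ?M = "{1..n} - {i}" and ?B = "sign_flips n f xs x"
  let ?A = "{j \<in> {1..n}. x j \<noteq> xs j \<and> j \<noteq> i \<and> f j = 1}"
  have card_M: "card ?M = n - 1" using assms(4) by simp
  have "shap n xs {#(x, y)#} (Psi n f) i = (\<Sum>S\<in>Pow ?M. shapley_weight (card ?M) (card S) *
      (Psi n f (merge (insert i S) xs x) - Psi n f (merge S xs x)))"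
    unfolding shap_def vfun_def card_M shapley_weight_def
    using assms(4) by (intro sum.cong refl) (simp add: diff_diff_add)
  also have "\<dots> = (if i \<in> ?B then - 2 * Psi n f x * parity_shapley_sum ?M (?B - {i}) else 0)"
    unfolding parity_shapley_sum_def sum_distrib_left
    using assms by (auto simp: Psi_merge_insert_diff intro!: sum.cong sum.neutral)
  also have "?B - {i} = ?A"
    by (auto simp: sign_flips_def)
  also have "parity_shapley_sum ?M ?A = real ((card ?A + 1) mod 2) / real (card ?A + 1)"
    by (rule parity_shapley_sum_eq) auto
  moreover have "f i \<in> {0, 1}" using assms(3,4) by (auto simp: binvec_def)
  ultimately show ?thesis
    using assms(4) by (auto simp: sign_flips_def Let_def)
qed

theorem lemma1:
  fixes n :: nat and xs f :: "nat \<Rightarrow> nat" and D :: "((nat \<Rightarrow> nat) \<times> 'b) multiset" and i :: nat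
  assumes "n \<ge> 1"
    and "binvec n xs"
    and "binvec n f"
    and "D \<noteq> {#}"
    and "\<forall>(x, y) \<in># D. binvec n x"
    and "i \<in> {1..n}"
  shows "shap n xs D (Psi n f) i =
    - (2 * real (f i) / real (size D)) *
      (\<Sum>\<^sub># (image_mset (\<lambda>(x, y).
          (if x i \<noteq> xs i then 1 else 0) * Psi n f x *
          (let A = {j \<in> {1..n}. x j \<noteq> xs j \<and> j \<noteq> i \<and> f j = 1}
           in real ((card A + 1) mod 2) / real (card A + 1))) D))"
proof -
  let ?T = "\<lambda>(x, y::'b). (if x i \<noteq> xs i then 1 else 0) * Psi n f x *
          (let A = {j \<in> {1..n}. x j \<noteq> xs j \<and> j \<noteq> i \<and> f j = 1}
           in real ((card A + 1) mod 2) / real (card A + 1))"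
  have "shap n xs D (Psi n f) i = \<Sum>\<^sub># (image_mset (\<lambda>p. shap n xs {#p#} (Psi n f) i) D) / real (size D)"
    by (rule shap_eq_mean)
  also have "image_mset (\<lambda>p. shap n xs {#p#} (Psi n f) i) D = image_mset (\<lambda>p. - 2 * real (f i) * ?T p) D"
  proof (rule image_mset_cong)
    fix p assume "p \<in># D"
    with assms(5) obtain x y where "p = (x, y)" "binvec n x" by (cases p) auto
    with assms show "shap n xs {#p#} (Psi n f) i = - 2 * real (f i) * ?T p"
      by (simp add: shap_Psi_singleton)
  qed
  also have "\<Sum>\<^sub># \<dots> = - 2 * real (f i) * \<Sum>\<^sub># (image_mset ?T D)"
    by (rule sum_mset_distrib_left[symmetric])
  finally show ?thesis
    by (simp only: times_divide_eq_left mult.commute mult.left_commute mult_minus_left)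
qed

end
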